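(* Let $k\geq2$ and let $L=(l_1,\dots,l_k)$ be positive integers with sum $n$ which are generic and reduced. Then the fundamental group $\pi_1(Tonn^{n,k}(L))$ is abelian.
   Context: $L$ is generic if for all $I,J\subseteq[k]$, $\sum_{i\in I}l_i=\sum_{j\in J}l_j$ implies $I=J$; reduced if $\gcd(l_1,\dots,l_k)=1$. The generalized tonnetz $Tonn^{n,k}(L)$ is the simplicial complex on vertex set $\mathbb{Z}_n$ whose maximal simplices are $\Delta(x;\sigma)=\{x,\,x+l_{\sigma(1)},\dots,x+l_{\sigma(1)}+\dots+l_{\sigma(k-1)}\}$ for $x\in\mathbb{Z}_n$, $\sigma\in S_k$. *)

theory Defs
  imports "HOL-Analysis.Analysis"
begin

text \<open>A tuple L = (l_1,...,l_k) is a list of naturals; index i in {0..<k} stands for l_(i+1).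
  The vertex set Z_n is represented by {0..<n}, with addition mod n, n = sum_list L.\<close>

definition generic :: "nat list \<Rightarrow> bool" where
  "generic L \<longleftrightarrow> (\<forall>I J. I \<subseteq> {..<length L} \<and> J \<subseteq> {..<length L} \<and>
      (\<Sum>i\<in>I. L ! i) = (\<Sum>j\<in>J. L ! j) \<longrightarrow> I = J)"

definition reduced :: "nat list \<Rightarrow> bool" where
  "reduced L \<longleftrightarrow> Gcd (set L) = 1"

definition tonn_facets :: "nat list \<Rightarrow> nat set set" where
  "tonn_facets L = {{(x + (\<Sum>j<m. L ! (\<sigma> j))) mod sum_list L | m. m < length L} | x \<sigma>.
      x < sum_list L \<and> \<sigma> permutes {..<length L}}"

definition tonnetz :: "nat list \<Rightarrow> nat set set" where
  "tonnetz L = {S. S \<noteq> {} \<and> (\<exists>F\<in>tonn_facets L. S \<subseteq> F)}"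

text \<open>Geometric realization of a (finite) simplicial complex with vertices in nat, as a
  subspace of nat => real (product topology): vertex v is the v-th unit vector, and a point
  is a convex combination of the vertices of some simplex.\<close>
definition geom_realization :: "nat set set \<Rightarrow> (nat \<Rightarrow> real) set" where
  "geom_realization K = {x. (\<forall>i. 0 \<le> x i) \<and>
      (\<exists>S\<in>K. finite S \<and> {i. x i \<noteq> 0} \<subseteq> S \<and> sum x S = 1)}"

definition pi1_abelian :: "'a::topological_space set \<Rightarrow> 'a \<Rightarrow> bool" where
  "pi1_abelian S a \<longleftrightarrow> (\<forall>p q. path p \<and> path_image p \<subseteq> S \<and> pathstart p = a \<and> pathfinish p = a \<and>
      path q \<and> path_image q \<subseteq> S \<and> pathstart q = a \<and> pathfinish q = a \<longrightarrow>
      homotopic_paths S (p +++ q) (q +++ p))"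

end

theory Submission
  imports Defs
begin

text \<open>For \<open>y \<in> \<real>\<^sup>k\<close> the function \<open>t \<mapsto> \<Sum>\<^sub>i l\<^sub>i \<lfloor>y\<^sub>i + t\<rfloor>\<close> is a nondecreasing integer step function
  which grows by \<open>n\<close> over every unit interval. The times it spends at the values \<open>\<equiv> v (mod n)\<close>
  are the barycentric coordinates of a point of \<open>|Tonn\<^sup>n\<^sup>,\<^sup>k(L)|\<close>: ordering the coordinates by their
  fractional parts, the values taken in one period are the vertices of a facet \<open>\<Delta>(x;\<sigma>)\<close>. The
  resulting map is invariant under adding constants and integer vectors \<open>d\<close> with
  \<open>\<Sum>\<^sub>i l\<^sub>i d\<^sub>i \<equiv> 0 (mod n)\<close>. For generic \<open>L\<close> these are the only identifications (the size of a
  jump determines which coordinates jump), and for reduced \<open>L\<close> the map is onto (Bezout).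
  Normalising the last coordinate to \<open>0\<close>, the realization becomes the quotient of \<open>\<real>\<^sup>k\<^sup>-\<^sup>1\<close> by a
  lattice of translations; this is a covering by a simply connected space with an abelian group
  of deck transformations, so the fundamental group is abelian.\<close>

section \<open>Quotients by lattices of translations\<close>

lemma pi1_abelian_homeomorphism:
  assumes hom: "homeomorphism S T f g" and "a \<in> S" and abel: "pi1_abelian T (f a)"
  shows "pi1_abelian S a"
  unfolding pi1_abelian_def
proof (intro allI impI, elim conjE)
  fix p q assume p: "path p" "path_image p \<subseteq> S" "pathstart p = a" "pathfinish p = a"
    and q: "path q" "path_image q \<subseteq> S" "pathstart q = a" "pathfinish q = a"
  have f: "continuous_on S f" "f \<in> S \<rightarrow> T" and g: "continuous_on T g" "g \<in> T \<rightarrow> S"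
    using hom by (auto simp: homeomorphism_def)
  have loop_f: "path (f \<circ> r) \<and> path_image (f \<circ> r) \<subseteq> T \<and> pathstart (f \<circ> r) = f a \<and> pathfinish (f \<circ> r) = f a"
    if "path r" "path_image r \<subseteq> S" "pathstart r = a" "pathfinish r = a" for r
    using that f path_continuous_image[of r f] continuous_on_subset[of S f]
    by (auto simp: path_image_compose pathstart_compose pathfinish_compose)
  have "homotopic_paths T (f \<circ> (p +++ q)) (f \<circ> (q +++ p))"
    using abel loop_f[OF p] loop_f[OF q] unfolding pi1_abelian_def path_compose_join by blast
  then have "homotopic_paths S (g \<circ> (f \<circ> (p +++ q))) (g \<circ> (f \<circ> (q +++ p)))"
    using g by (rule homotopic_paths_continuous_image)
  moreover have recover: "homotopic_paths S (r1 +++ r2) (g \<circ> (f \<circ> (r1 +++ r2)))"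
    if "path r1" "path_image r1 \<subseteq> S" "path r2" "path_image r2 \<subseteq> S" "pathfinish r1 = pathstart r2"
    for r1 r2
  proof (rule homotopic_paths_eq)
    show S: "path_image (r1 +++ r2) \<subseteq> S" using that path_image_join_subset by blast
    show "(r1 +++ r2) t = (g \<circ> (f \<circ> (r1 +++ r2))) t" if "t \<in> {0..1}" for t
      using S that homeomorphism_apply1[OF hom] by (simp add: path_image_def image_subset_iff)
  qed (use that in simp)
  ultimately show "homotopic_paths S (p +++ q) (q +++ p)"
    using recover[OF p(1,2) q(1,2)] recover[OF q(1,2) p(1,2)] p(3,4) q(3,4)
    by (metis homotopic_paths_sym homotopic_paths_trans)
qed

locale lattice_cover =
  fixes C :: "'a::real_normed_vector set" and \<Lambda> :: "'a set"
    and p :: "'a \<Rightarrow> 'b::real_normed_vector" and X :: "'b set"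
  assumes continuous_on_p: "continuous_on C p"
    and p_image: "p ` C = X"
    and closed_C: "closed C"
    and lattice_zero: "0 \<in> \<Lambda>"
    and lattice_diff: "\<And>l m. l \<in> \<Lambda> \<Longrightarrow> m \<in> \<Lambda> \<Longrightarrow> l - m \<in> \<Lambda>"
    and C_add_lattice: "\<And>u l. u \<in> C \<Longrightarrow> l \<in> \<Lambda> \<Longrightarrow> u + l \<in> C"
    and p_eq_iff: "\<And>y z. y \<in> C \<Longrightarrow> z \<in> C \<Longrightarrow> p y = p z \<longleftrightarrow> z - y \<in> \<Lambda>"
    and lattice_separated: "\<And>l m. l \<in> \<Lambda> \<Longrightarrow> m \<in> \<Lambda> \<Longrightarrow> l \<noteq> m \<Longrightarrow> 1 \<le> dist l m"
    and lattice_cocompact: "\<exists>K. compact K \<and> (\<forall>z\<in>C. \<exists>l\<in>\<Lambda>. z - l \<in> K)"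
begin

lemma lattice_minus: "l \<in> \<Lambda> \<Longrightarrow> - l \<in> \<Lambda>"
  using lattice_diff[OF lattice_zero, of l] by simp

lemma lattice_add: "l \<in> \<Lambda> \<Longrightarrow> m \<in> \<Lambda> \<Longrightarrow> l + m \<in> \<Lambda>"
  using lattice_diff[of l "- m"] lattice_minus by simp

lemma C_diff_lattice: "u \<in> C \<Longrightarrow> l \<in> \<Lambda> \<Longrightarrow> u - l \<in> C"
  using C_add_lattice[of u "- l"] lattice_minus by simp

lemma p_add_lattice: "u \<in> C \<Longrightarrow> l \<in> \<Lambda> \<Longrightarrow> p (u + l) = p u"
  using p_eq_iff[of u "u + l"] C_add_lattice by simp

definition saturation :: "'a set \<Rightarrow> 'a set" where
  "saturation U = (\<Union>l\<in>\<Lambda>. (+) l ` U)"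

lemma mem_saturation: "z \<in> saturation U \<longleftrightarrow> (\<exists>l\<in>\<Lambda>. z - l \<in> U)"
proof -
  have "z \<in> (+) l ` U \<longleftrightarrow> z - l \<in> U" for l
    by (auto simp: image_iff) (metis add.commute diff_add_cancel)
  then show ?thesis unfolding saturation_def by blast
qed

lemma open_saturation: "open U \<Longrightarrow> open (saturation U)"
  unfolding saturation_def by (intro open_UN ballI open_translation)

lemma saturation_fibre:
  assumes "y \<in> C" "z \<in> C" "p y = p z" "y \<in> saturation U"
  shows "z \<in> saturation U"
proof -
  obtain l where "l \<in> \<Lambda>" "y - l \<in> U" using assms(4) mem_saturation by blast
  moreover have "z - y \<in> \<Lambda>" using assms p_eq_iff by blast
  ultimately have "z - (l + (z - y)) \<in> U" "l + (z - y) \<in> \<Lambda>"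
    using lattice_add by (auto simp: diff_add_eq_diff_diff_swap)
  then show ?thesis using mem_saturation by blast
qed

lemma image_Int_saturation: "p ` (C \<inter> saturation U) = p ` (C \<inter> U)"
proof
  show "p ` (C \<inter> saturation U) \<subseteq> p ` (C \<inter> U)"
  proof
    fix x assume "x \<in> p ` (C \<inter> saturation U)"
    then obtain z l where z: "z \<in> C" "l \<in> \<Lambda>" "z - l \<in> U" "x = p z"
      using mem_saturation by blast
    then have "z - l \<in> C" "p (z - l) = x"
      using p_add_lattice[of "z - l" l] C_diff_lattice by simp_all
    then show "x \<in> p ` (C \<inter> U)" using z by blast
  qed
  show "p ` (C \<inter> U) \<subseteq> p ` (C \<inter> saturation U)"
    using mem_saturation lattice_zero by (intro image_mono) force
qed

lemma image_complement_saturation: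
  assumes K: "\<And>z. z \<in> C \<Longrightarrow> \<exists>l\<in>\<Lambda>. z - l \<in> K"
  shows "X - p ` (C \<inter> saturation U) = p ` ((C - saturation U) \<inter> K)"
proof
  show "X - p ` (C \<inter> saturation U) \<subseteq> p ` ((C - saturation U) \<inter> K)"
  proof
    fix x assume x: "x \<in> X - p ` (C \<inter> saturation U)"
    then obtain z where z: "z \<in> C" "x = p z" "z \<notin> saturation U" using p_image by blast
    obtain l where l: "l \<in> \<Lambda>" "z - l \<in> K" using K z(1) by blast
    have "z - l \<in> C" "p (z - l) = p z"
      using C_diff_lattice p_add_lattice[of "z - l" l] z l by auto
    moreover have "z - l \<notin> saturation U"
      using saturation_fibre[of "z - l" z U] z calculation by blast
    ultimately show "x \<in> p ` ((C - saturation U) \<inter> K)" using l z by (metis DiffI IntI image_eqI)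
  qed
  show "p ` ((C - saturation U) \<inter> K) \<subseteq> X - p ` (C \<inter> saturation U)"
  proof
    fix x assume "x \<in> p ` ((C - saturation U) \<inter> K)"
    then obtain z where z: "z \<in> C" "z \<notin> saturation U" "x = p z" by blast
    have "x \<notin> p ` (C \<inter> saturation U)"
    proof
      assume "x \<in> p ` (C \<inter> saturation U)"
      then obtain u where "u \<in> C" "u \<in> saturation U" "p u = p z" using z by blast
      then show False using saturation_fibre z by blast
    qed
    then show "x \<in> X - p ` (C \<inter> saturation U)" using z p_image by blast
  qed
qed

lemma openin_image_p:
  assumes "openin (top_of_set C) U"
  shows "openin (top_of_set X) (p ` U)"
proof -
  obtain V where V: "open V" "U = C \<inter> V" using assms by (auto simp: openin_open)
  obtain K where K: "compact K" "\<And>z. z \<in> C \<Longrightarrow> \<exists>l\<in>\<Lambda>. z - l \<in> K"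
    using lattice_cocompact by blast
  have "compact ((C - saturation V) \<inter> K)"
    using closed_C open_saturation[OF V(1)] K(1)
    by (simp add: Diff_eq closed_Int_compact closed_Int open_closed)
  then have closed: "closed (p ` ((C - saturation V) \<inter> K))"
    by (intro compact_imp_closed compact_continuous_image continuous_on_subset[OF continuous_on_p]) auto
  have eq: "X - p ` U = p ` ((C - saturation V) \<inter> K)"
    using image_complement_saturation[OF K(2), of V] unfolding image_Int_saturation V(2) .
  have "p ` ((C - saturation V) \<inter> K) \<subseteq> X" using eq by blast
  then have "closedin (top_of_set X) (X - p ` U)" unfolding eq using closed by (rule closed_subset)
  then have "openin (top_of_set X) (X - (X - p ` U))" by (simp add: closedin_def)
  moreover have "X - (X - p ` U) = p ` U" using V p_image by blast
  ultimately show ?thesis by simp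
qed

lemma image_sheet_translate:
  assumes "l \<in> \<Lambda>"
  shows "p ` (C \<inter> ball (c + l) r) = p ` (C \<inter> ball c r)"
proof
  show "p ` (C \<inter> ball (c + l) r) \<subseteq> p ` (C \<inter> ball c r)"
  proof
    fix x assume "x \<in> p ` (C \<inter> ball (c + l) r)"
    then obtain z where z: "z \<in> C" "dist (c + l) z < r" "x = p z" by auto
    have "z - l \<in> C \<inter> ball c r"
      using C_diff_lattice[OF z(1) assms] z(2) by (simp add: dist_norm algebra_simps)
    moreover have "p (z - l) = x"
      using p_add_lattice[of "z - l" l] C_diff_lattice z assms by simp
    ultimately show "x \<in> p ` (C \<inter> ball c r)" by blast
  qed
  show "p ` (C \<inter> ball c r) \<subseteq> p ` (C \<inter> ball (c + l) r)"
  proof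
    fix x assume "x \<in> p ` (C \<inter> ball c r)"
    then obtain w where w: "w \<in> C" "dist c w < r" "x = p w" by auto
    have "w + l \<in> C \<inter> ball (c + l) r"
      using C_add_lattice[OF w(1) assms] w(2) by (simp add: dist_norm algebra_simps)
    moreover have "p (w + l) = x" using p_add_lattice w assms by simp
    ultimately show "x \<in> p ` (C \<inter> ball (c + l) r)" by blast
  qed
qed

lemma preimage_image_sheet: "C \<inter> p -` p ` (C \<inter> ball c r) = (\<Union>l\<in>\<Lambda>. C \<inter> ball (c + l) r)"
proof
  show "C \<inter> p -` p ` (C \<inter> ball c r) \<subseteq> (\<Union>l\<in>\<Lambda>. C \<inter> ball (c + l) r)"
  proof
    fix z assume "z \<in> C \<inter> p -` p ` (C \<inter> ball c r)"
    then obtain w where z: "z \<in> C" and w: "w \<in> C" "dist c w < r" "p w = p z" by auto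
    then have "z - w \<in> \<Lambda>" using p_eq_iff by blast
    moreover have "dist (c + (z - w)) z = dist c w" by (simp add: dist_norm algebra_simps)
    ultimately show "z \<in> (\<Union>l\<in>\<Lambda>. C \<inter> ball (c + l) r)"
      using z w by (intro UN_I[of "z - w"]) auto
  qed
  show "(\<Union>l\<in>\<Lambda>. C \<inter> ball (c + l) r) \<subseteq> C \<inter> p -` p ` (C \<inter> ball c r)"
    using image_sheet_translate by blast
qed

lemma inj_on_sheet: "inj_on p (C \<inter> ball c (1/2))"
proof (rule inj_onI)
  fix z z' assume z: "z \<in> C \<inter> ball c (1/2)" "z' \<in> C \<inter> ball c (1/2)" "p z = p z'"
  then have "z' - z \<in> \<Lambda>" using p_eq_iff by blast
  moreover have "dist z z' < 1" using z dist_triangle_half_r[of c z 1 z'] by auto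
  then have "dist (z' - z) 0 < 1" by (simp add: dist_norm norm_minus_commute)
  ultimately have "z' - z = 0" using lattice_separated[of "z' - z" 0] lattice_zero by force
  then show "z = z'" by simp
qed

lemma disjnt_sheets:
  assumes "l \<in> \<Lambda>" "m \<in> \<Lambda>" "l \<noteq> m"
  shows "disjnt (C \<inter> ball (c + l) (1/2)) (C \<inter> ball (c + m) (1/2))"
proof -
  have "1/2 + 1/2 \<le> dist (c + l) (c + m)"
    using lattice_separated[OF assms] by (simp add: dist_norm)
  then show ?thesis using disjoint_ballI unfolding disjnt_def by blast
qed

lemma homeomorphism_sheet:
  assumes "l \<in> \<Lambda>"
  obtains q where "homeomorphism (C \<inter> ball (c + l) (1/2)) (p ` (C \<inter> ball c (1/2))) p q"
proof (rule homeomorphism_injective_open_map)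
  let ?T = "p ` (C \<inter> ball c (1/2))"
  show "continuous_on (C \<inter> ball (c + l) (1/2)) p"
    using continuous_on_p by (rule continuous_on_subset) simp
  show image: "p ` (C \<inter> ball (c + l) (1/2)) = ?T" by (rule image_sheet_translate[OF assms])
  show "inj_on p (C \<inter> ball (c + l) (1/2))" by (rule inj_on_sheet)
  fix U assume U: "openin (top_of_set (C \<inter> ball (c + l) (1/2))) U"
  then have "openin (top_of_set C) U" by (metis openin_open_Int openin_trans open_ball)
  then have "openin (top_of_set X) (p ` U)" by (rule openin_image_p)
  moreover have "U \<subseteq> C \<inter> ball (c + l) (1/2)" using openin_subset[OF U] by simp
  then have "p ` U \<subseteq> ?T" unfolding image[symmetric] by (rule image_mono)
  moreover have "?T \<subseteq> X" using p_image by blast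
  ultimately show "openin (top_of_set ?T) (p ` U)" by (meson openin_subset_trans)
qed

theorem covering_space_p: "covering_space C p X"
proof
  show "continuous_on C p" by (rule continuous_on_p)
  show "p ` C = X" by (rule p_image)
  fix x assume "x \<in> X"
  then obtain y where y: "y \<in> C" "p y = x" using p_image by blast
  define T where "T = p ` (C \<inter> ball y (1/2))"
  define sheets where "sheets = (\<lambda>l. C \<inter> ball (y + l) (1/2)) ` \<Lambda>"
  have "x \<in> T" "openin (top_of_set X) T"
    using y unfolding T_def by (auto intro!: openin_image_p simp: openin_open_Int)
  moreover have "\<Union>sheets = C \<inter> p -` T"
    unfolding sheets_def T_def preimage_image_sheet by blast
  moreover have "\<forall>u\<in>sheets. openin (top_of_set C) u"
    unfolding sheets_def by (auto simp: openin_open_Int)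
  moreover have "pairwise disjnt sheets"
    unfolding sheets_def by (rule pairwise_imageI) (use disjnt_sheets in auto)
  moreover have "\<forall>u\<in>sheets. \<exists>q. homeomorphism u T p q"
    unfolding sheets_def T_def using homeomorphism_sheet by blast
  ultimately show "\<exists>T. x \<in> T \<and> openin (top_of_set X) T \<and>
          (\<exists>v. \<Union>v = C \<inter> p -` T \<and> (\<forall>u\<in>v. openin (top_of_set C) u) \<and>
               pairwise disjnt v \<and> (\<forall>u\<in>v. \<exists>q. homeomorphism u T p q))"
    by blast
qed

lemma lift_loop:
  assumes y: "y \<in> C" and g: "path g" "path_image g \<subseteq> X" "pathstart g = p y" "pathfinish g = p y"
  obtains h where "path h" "path_image h \<subseteq> C" "pathstart h = y" "pathfinish h - y \<in> \<Lambda>"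
    and "\<And>t. t \<in> {0..1} \<Longrightarrow> p (h t) = g t"
proof -
  obtain h where h: "path h" "path_image h \<subseteq> C" "pathstart h = y"
    and ph: "\<And>t. t \<in> {0..1} \<Longrightarrow> p (h t) = g t"
    using covering_space_lift_path_strong[OF covering_space_p y g(1-3)] by blast
  have "pathfinish h \<in> C" using h(2) pathfinish_in_path_image by blast
  moreover have "p y = p (pathfinish h)" using ph[of 1] g(4) by (simp add: pathfinish_def)
  ultimately have "pathfinish h - y \<in> \<Lambda>" using p_eq_iff[OF y] by blast
  from that[OF h this ph] show ?thesis .
qed

text \<open>The end point \<open>pathfinish h1 + pathfinish h2 - y\<close> of the lift is symmetric in the two
  loops; this is where commutativity comes from.\<close>

lemma lift_join:
  assumes h1: "path h1" "path_image h1 \<subseteq> C" "pathstart h1 = y" "pathfinish h1 - y \<in> \<Lambda>"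
      "\<And>t. t \<in> {0..1} \<Longrightarrow> p (h1 t) = g1 t"
    and h2: "path h2" "path_image h2 \<subseteq> C" "pathstart h2 = y"
      "\<And>t. t \<in> {0..1} \<Longrightarrow> p (h2 t) = g2 t"
    and g: "path (g1 +++ g2)" "path_image (g1 +++ g2) \<subseteq> X"
  obtains A where "path A" "path_image A \<subseteq> C" "pathstart A = y"
    and "pathfinish A = pathfinish h1 + pathfinish h2 - y" and "homotopic_paths X (g1 +++ g2) (p \<circ> A)"
proof
  let ?h = "\<lambda>s. h2 s + (pathfinish h1 - y)"
  have "path ?h" "path_image ?h \<subseteq> C"
    using h2(1,2) h1(4) C_add_lattice by (auto simp: path_def path_image_def intro!: continuous_intros)
  moreover have "pathfinish h1 = pathstart ?h" using h2(3) by (simp add: pathstart_def)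
  ultimately show "path (h1 +++ ?h)" "path_image (h1 +++ ?h) \<subseteq> C"
    using h1 by (simp_all add: path_image_join)
  show "pathstart (h1 +++ ?h) = y" "pathfinish (h1 +++ ?h) = pathfinish h1 + pathfinish h2 - y"
    using h1(3) by (simp_all add: joinpaths_def pathstart_def pathfinish_def)
  have "p ((h1 +++ ?h) t) = (g1 +++ g2) t" if t: "t \<in> {0..1}" for t
  proof (cases "t \<le> 1/2")
    case False
    then have s: "2 * t - 1 \<in> {0..1}" using t by auto
    then have "h2 (2 * t - 1) \<in> C" using h2(2) by (auto simp: path_image_def)
    then show ?thesis using False h2(4)[OF s] p_add_lattice h1(4) by (simp add: joinpaths_def)
  qed (use h1(5) t in \<open>simp add: joinpaths_def\<close>)
  then show "homotopic_paths X (g1 +++ g2) (p \<circ> (h1 +++ ?h))"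
    using g by (intro homotopic_paths_eq) auto
qed

theorem pi1_abelian_quotient:
  assumes C: "simply_connected C" and a: "a \<in> X"
  shows "pi1_abelian X a"
  unfolding pi1_abelian_def
proof (intro allI impI, elim conjE)
  fix g1 g2
  assume g1: "path g1" "path_image g1 \<subseteq> X" "pathstart g1 = a" "pathfinish g1 = a"
    and g2: "path g2" "path_image g2 \<subseteq> X" "pathstart g2 = a" "pathfinish g2 = a"
  obtain y where y: "y \<in> C" "p y = a" using a p_image by blast
  obtain h1 where h1: "path h1" "path_image h1 \<subseteq> C" "pathstart h1 = y" "pathfinish h1 - y \<in> \<Lambda>"
    "\<And>t. t \<in> {0..1} \<Longrightarrow> p (h1 t) = g1 t"
    using lift_loop[OF y(1) g1(1,2)] g1(3,4) y(2) by metis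
  obtain h2 where h2: "path h2" "path_image h2 \<subseteq> C" "pathstart h2 = y" "pathfinish h2 - y \<in> \<Lambda>"
    "\<And>t. t \<in> {0..1} \<Longrightarrow> p (h2 t) = g2 t"
    using lift_loop[OF y(1) g2(1,2)] g2(3,4) y(2) by metis
  have "path (g1 +++ g2)" "path_image (g1 +++ g2) \<subseteq> X"
    "path (g2 +++ g1)" "path_image (g2 +++ g1) \<subseteq> X"
    using g1 g2 by (simp_all add: path_image_join)
  then obtain A B where A: "path A" "path_image A \<subseteq> C" "pathstart A = y"
      "pathfinish A = pathfinish h1 + pathfinish h2 - y" "homotopic_paths X (g1 +++ g2) (p \<circ> A)"
    and B: "path B" "path_image B \<subseteq> C" "pathstart B = y"
      "pathfinish B = pathfinish h2 + pathfinish h1 - y" "homotopic_paths X (g2 +++ g1) (p \<circ> B)"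
    using lift_join[OF h1 h2(1-3,5)] lift_join[OF h2 h1(1-3,5)] by metis
  have "homotopic_paths C A B"
    using C A B by (simp add: simply_connected_eq_homotopic_paths add.commute)
  then have "homotopic_paths X (p \<circ> A) (p \<circ> B)"
    using p_image by (intro homotopic_paths_continuous_image[OF _ continuous_on_p]) auto
  then show "homotopic_paths X (g1 +++ g2) (g2 +++ g1)"
    using A(5) B(5) homotopic_paths_sym homotopic_paths_trans by blast
qed

end

lemma eventually_floor_at_right:
  fixes a c :: real
  shows "\<forall>\<^sub>F t in at_right a. \<lfloor>c + t\<rfloor> = \<lfloor>c + a\<rfloor>"
  unfolding eventually_at_right_field
  by (rule exI[of _ "of_int \<lfloor>c + a\<rfloor> + 1 - c"]) (auto simp: floor_eq_iff, linarith+)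

lemma eventually_floor_at_left:
  fixes a c :: real
  shows "\<forall>\<^sub>F t in at_left a. \<lfloor>c + t\<rfloor> = \<lfloor>c + a\<rfloor> - (if c + a \<in> \<int> then 1 else 0)"
proof (cases "c + a \<in> \<int>")
  case True
  then obtain z where z: "c + a = of_int z" by (auto elim: Ints_cases)
  then show ?thesis
    unfolding eventually_at_left_field
    by (intro exI[of _ "a - 1"]) (auto simp: True floor_eq_iff)
next
  case False
  then have "0 < frac (c + a)" using frac_eq_0_iff[of "c + a"] frac_ge_0[of "c + a"] by linarith
  then show ?thesis
    unfolding eventually_at_left_field using False
    by (intro exI[of _ "a - frac (c + a)"]) (auto simp: floor_eq_iff frac_def, linarith+)
qed

lemma exists_sorting_permutation:
  fixes f :: "nat \<Rightarrow> 'a::linorder"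
  shows "\<exists>\<sigma>. \<sigma> permutes {..<m} \<and> (\<forall>a b. a \<le> b \<longrightarrow> b < m \<longrightarrow> f (\<sigma> a) \<le> f (\<sigma> b))"
proof -
  define xs where "xs = sort_key f [0..<m]"
  have d: "distinct xs" and len: "length xs = m" and st: "set xs = {..<m}" and so: "sorted (map f xs)"
    unfolding xs_def by (auto simp: atLeast0LessThan)
  define \<sigma> where "\<sigma> j = (if j < m then xs ! j else j)" for j
  have "bij_betw ((!) xs) {..<m} {..<m}" using bij_betw_nth[OF d] len st by simp
  then have "bij_betw \<sigma> {..<m} {..<m}" by (rule bij_betw_cong[THEN iffD1, rotated]) (simp add: \<sigma>_def)
  then have "\<sigma> permutes {..<m}" by (rule bij_imp_permutes) (simp add: \<sigma>_def)
  moreover have "f (\<sigma> a) \<le> f (\<sigma> b)" if "a \<le> b" "b < m" for a b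
    using sorted_nth_mono[OF so that(1)] that len unfolding \<sigma>_def by simp
  ultimately show ?thesis by blast
qed

lemma sorted_threshold_eq_lessThan:
  fixes \<theta> :: "nat \<Rightarrow> 'a::order"
  assumes sorted: "\<And>a b. a \<le> b \<Longrightarrow> b < K \<Longrightarrow> \<theta> a \<le> \<theta> b"
  shows "{j. j < K \<and> \<theta> j \<le> t} = {..<card {j. j < K \<and> \<theta> j \<le> t}}"
proof (cases "{j. j < K \<and> \<theta> j \<le> t} = {}")
  case False
  define A where "A = {j. j < K \<and> \<theta> j \<le> t}"
  have "finite A" unfolding A_def by simp
  moreover have "A \<noteq> {}" using False unfolding A_def .
  ultimately have "Max A \<in> A" by (rule Max_in)
  then have "A = {..Max A}"
    using \<open>finite A\<close> sorted unfolding A_def by (auto intro: order.trans)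
  then show ?thesis unfolding A_def[symmetric] by (metis card_atMost lessThan_Suc_atMost)
next
  case True
  then show ?thesis by (metis card.empty lessThan_0)
qed

lemma floor_add_window:
  fixes c t :: real
  assumes "0 \<le> t" "t < 1"
  shows "\<lfloor>c + t\<rfloor> = \<lfloor>c\<rfloor> + (if 1 - frac c \<le> t then 1 else 0)"
  using assms unfolding frac_def by (auto simp: floor_eq_iff) linarith+

lemma nat_mod_add_mult:
  fixes g j :: int and p N :: nat
  assumes "0 < N"
  shows "nat ((g + int p + j * int N) mod int N) = (nat (g mod int N) + p) mod N"
proof -
  have "(g + int p + j * int N) mod int N = (g mod int N + int p) mod int N"
    by (metis mod_add_left_eq mod_mult_self1)
  also have "g mod int N = int (nat (g mod int N))" using assms by simp
  finally show ?thesis by (metis nat_int of_nat_add zmod_int)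
qed

lemma add_mod_cancel_less:
  fixes x a b N :: nat
  assumes "a < N" "b < N" "(x + a) mod N = (x + b) mod N"
  shows "a = b"
proof -
  have "(int x + int a) mod int N = (int x + int b) mod int N"
    using assms(3) by (metis of_nat_add zmod_int)
  then have "int N dvd int a - int b" by (metis mod_eq_dvd_iff add_diff_cancel_left)
  then show ?thesis using assms(1,2) dvd_imp_le_int[of "int a - int b" "int N"] by force
qed

lemma nat_step_interval:
  fixes f :: "nat \<Rightarrow> nat"
  shows "f 0 \<le> r \<Longrightarrow> r < f K \<Longrightarrow> \<exists>m<K. f m \<le> r \<and> r < f (Suc m)"
proof (induction K)
  case (Suc K)
  then show ?case by (cases "r < f K") (auto intro: less_SucI)
qed simp

lemma Gcd_set_Bezout: "\<exists>d::nat \<Rightarrow> int. (\<Sum>i<length xs. int (xs ! i) * d i) = int (Gcd (set xs))"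
proof (induction xs)
  case (Cons a xs)
  then obtain d where d: "(\<Sum>i<length xs. int (xs ! i) * d i) = int (Gcd (set xs))" by blast
  obtain u v where uv: "u * int a + v * int (Gcd (set xs)) = gcd (int a) (int (Gcd (set xs)))"
    using bezout_int by blast
  define d' where "d' i = (if i = 0 then u else v * d (i - 1))" for i
  have "(\<Sum>i<length (a # xs). int ((a # xs) ! i) * d' i) = int a * u + v * (\<Sum>i<length xs. int (xs ! i) * d i)"
    unfolding length_Cons sum.lessThan_Suc_shift by (simp add: d'_def sum_distrib_left mult.left_commute)
  also have "\<dots> = int (Gcd (set (a # xs)))" using d uv by (simp add: mult.commute)
  finally show ?case by blast
qed simp

definition trunc_bcontfun :: "nat \<Rightarrow> (nat \<Rightarrow> real) \<Rightarrow> nat \<Rightarrow>\<^sub>C real" where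
  "trunc_bcontfun N f = Bcontfun (\<lambda>i. if i < N then f i else 0)"

lemma trunc_in_bcontfun:
  fixes f :: "nat \<Rightarrow> real"
  shows "(\<lambda>i. if i < N then f i else 0) \<in> bcontfun"
proof (rule bcontfun_normI)
  show "norm (if i < N then f i else 0) \<le> (\<Sum>j<N. \<bar>f j\<bar>)" for i
    using member_le_sum[of i "{..<N}" "\<lambda>j. \<bar>f j\<bar>"] by (simp add: sum_nonneg)
qed simp

lemma trunc_bcontfun_apply [simp]: "apply_bcontfun (trunc_bcontfun N f) i = (if i < N then f i else 0)"
  unfolding trunc_bcontfun_def using trunc_in_bcontfun[of N f] by (simp add: Bcontfun_inverse)

lemma norm_trunc_bcontfun_diff: "norm (trunc_bcontfun N f - trunc_bcontfun N g) \<le> (\<Sum>i<N. \<bar>f i - g i\<bar>)"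
proof (rule norm_bound)
  show "norm (apply_bcontfun (trunc_bcontfun N f - trunc_bcontfun N g) i) \<le> (\<Sum>i<N. \<bar>f i - g i\<bar>)" for i
    using member_le_sum[of i "{..<N}" "\<lambda>j. \<bar>f j - g j\<bar>"] by (simp add: sum_nonneg)
qed

lemma continuous_on_trunc_bcontfun: "continuous_on S (trunc_bcontfun N)"
proof -
  have "((\<lambda>f. \<Sum>i<N. \<bar>f i - g i\<bar>) \<longlongrightarrow> 0) (at g)" for g :: "nat \<Rightarrow> real"
  proof -
    have "continuous_on UNIV (\<lambda>f::nat \<Rightarrow> real. \<Sum>i<N. \<bar>f i - g i\<bar>)"
      by (intro continuous_intros continuous_on_product_coordinates)
    then have "isCont (\<lambda>f::nat \<Rightarrow> real. \<Sum>i<N. \<bar>f i - g i\<bar>) g"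
      by (simp add: continuous_on_eq_continuous_at)
    then show ?thesis unfolding isCont_def by simp
  qed
  then have "((\<lambda>f. trunc_bcontfun N f - trunc_bcontfun N g) \<longlongrightarrow> 0) (at g)" for g
    by (rule Lim_transform_bound[rotated])
      (simp add: order.trans[OF norm_trunc_bcontfun_diff] sum_nonneg)
  then have "(trunc_bcontfun N \<longlongrightarrow> trunc_bcontfun N g) (at g)" for g
    by (simp add: Lim_null[of "trunc_bcontfun N"])
  then show ?thesis by (simp add: continuous_at_imp_continuous_on isCont_def)
qed

lemma abs_apply_bcontfun_diff_le: "\<bar>apply_bcontfun y i - apply_bcontfun z i\<bar> \<le> norm (y - z)"
  using norm_bounded[of "y - z" i] by simp

lemma continuous_on_apply_bcontfun_at_point: "continuous_on S (\<lambda>y::'a::topological_space \<Rightarrow>\<^sub>C real. apply_bcontfun y i)"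
  by (rule lipschitz_on_continuous_on[of 1]) (auto intro!: lipschitz_onI simp: dist_norm abs_apply_bcontfun_diff_le)

locale tonn_weights =
  fixes L :: "nat list"
  assumes L_nonempty: "L \<noteq> []"
    and L_pos: "\<forall>l\<in>set L. 0 < l"
begin

abbreviation "k \<equiv> length L"
abbreviation "n \<equiv> sum_list L"

lemma k_pos: "0 < k"
  using L_nonempty by simp

lemma nth_L_pos: "i < k \<Longrightarrow> 0 < L ! i"
  using L_pos nth_mem by blast

lemma n_eq_sum: "n = (\<Sum>i<k. L ! i)"
  by (simp add: sum_list_sum_nth atLeast0LessThan)

lemma n_pos: "0 < n"
  using member_le_sum[of 0 "{..<k}" "\<lambda>i. L ! i"] nth_L_pos[of 0] k_pos n_eq_sum by simp

section \<open>The weighted floor sum\<close>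

definition floor_sum :: "(nat \<Rightarrow> real) \<Rightarrow> real \<Rightarrow> int" where
  "floor_sum y t = (\<Sum>i<k. int (L ! i) * \<lfloor>y i + t\<rfloor>)"

lemma floor_sum_mono: "s \<le> t \<Longrightarrow> floor_sum y s \<le> floor_sum y t"
  unfolding floor_sum_def by (intro sum_mono mult_left_mono floor_mono) auto

lemma floor_sum_translate_int:
  "floor_sum (\<lambda>i. y i + of_int (d i)) t = floor_sum y t + (\<Sum>i<k. int (L ! i) * d i)"
proof -
  have "\<lfloor>y i + of_int (d i) + t\<rfloor> = \<lfloor>y i + t\<rfloor> + d i" for i
    using floor_add_int[of "y i + t" "d i"] by (simp add: add_ac)
  then show ?thesis
    unfolding floor_sum_def by (simp add: distrib_left sum.distrib)
qed

lemma floor_sum_add_const: "floor_sum (\<lambda>i. y i + s) t = floor_sum y (t + s)"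
  unfolding floor_sum_def by (simp add: algebra_simps)

lemma floor_sum_add_int: "floor_sum y (t + of_int j) = floor_sum y t + j * int n"
  using floor_sum_translate_int[of y "\<lambda>_. j" t]
  by (simp add: floor_sum_add_const[symmetric] sum_distrib_left n_eq_sum mult.commute)

lemma floor_sum_cong: "(\<And>i. i < k \<Longrightarrow> y i = y' i) \<Longrightarrow> floor_sum y = floor_sum y'"
  unfolding floor_sum_def by (intro ext sum.cong) auto

lemma floor_sum_shift_le: "(\<And>i. i < k \<Longrightarrow> y i \<le> y' i + \<delta>) \<Longrightarrow> floor_sum y t \<le> floor_sum y' (t + \<delta>)"
  unfolding floor_sum_def by (intro sum_mono mult_left_mono floor_mono) (auto simp: algebra_simps)

lemma eventually_floor_sum_at_right: "\<forall>\<^sub>F t in at_right a. floor_sum y t = floor_sum y a"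
proof -
  have "\<forall>\<^sub>F t in at_right a. \<forall>i\<in>{..<k}. \<lfloor>y i + t\<rfloor> = \<lfloor>y i + a\<rfloor>"
    by (intro eventually_ball_finite ballI eventually_floor_at_right) auto
  then show ?thesis
    unfolding floor_sum_def by eventually_elim (auto intro: sum.cong)
qed

lemma eventually_floor_sum_at_left:
  "\<forall>\<^sub>F t in at_left a. floor_sum y t = floor_sum y a - (\<Sum>i | i < k \<and> y i + a \<in> \<int>. int (L ! i))"
proof -
  have "\<forall>\<^sub>F t in at_left a. \<forall>i\<in>{..<k}.
      \<lfloor>y i + t\<rfloor> = \<lfloor>y i + a\<rfloor> - (if y i + a \<in> \<int> then 1 else 0)"
    by (intro eventually_ball_finite ballI eventually_floor_at_left) auto
  then show ?thesis
  proof eventually_elim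
    case (elim t)
    then have "floor_sum y t =
        (\<Sum>i<k. int (L ! i) * \<lfloor>y i + a\<rfloor> - (if y i + a \<in> \<int> then int (L ! i) else 0))"
      unfolding floor_sum_def by (intro sum.cong) (auto simp: right_diff_distrib)
    also have "\<dots> = floor_sum y a - (\<Sum>i<k. if y i + a \<in> \<int> then int (L ! i) else 0)"
      unfolding floor_sum_def sum_subtractf ..
    also have "(\<Sum>i<k. if y i + a \<in> \<int> then int (L ! i) else 0) = (\<Sum>i | i < k \<and> y i + a \<in> \<int>. int (L ! i))"
      by (subst sum.inter_filter[symmetric]) (auto intro: sum.cong)
    finally show ?case .
  qed
qed

definition first_reach :: "(nat \<Rightarrow> real) \<Rightarrow> int \<Rightarrow> real" where
  "first_reach y w = Inf {t. w \<le> floor_sum y t}"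

lemma reach_set_nonempty: "\<exists>t. w \<le> floor_sum y t"
proof -
  define j where "j = max 0 (w - floor_sum y 0)"
  have "j \<le> j * int n" using n_pos j_def by (simp add: mult_le_cancel_left1)
  then have "w \<le> floor_sum y (0 + of_int j)" unfolding floor_sum_add_int j_def by linarith
  then show ?thesis by blast
qed

lemma reach_set_bdd_below: "bdd_below {t. w \<le> floor_sum y t}"
proof (rule bdd_belowI)
  fix t assume "t \<in> {t. w \<le> floor_sum y t}"
  then have w: "w \<le> floor_sum y t" by simp
  define b where "b = - \<bar>w - floor_sum y 0\<bar> - 1"
  show "of_int b \<le> t"
  proof (rule ccontr)
    assume "\<not> of_int b \<le> t"
    then have "floor_sum y t \<le> floor_sum y (0 + of_int b)" by (intro floor_sum_mono) simp
    also have "\<dots> = floor_sum y 0 + b * int n" by (rule floor_sum_add_int)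
    also have "\<dots> \<le> floor_sum y 0 + b * 1"
      using n_pos b_def by (intro add_left_mono mult_left_mono_neg) auto
    finally show False using w b_def by linarith
  qed
qed

lemma first_reach_attained: "w \<le> floor_sum y (first_reach y w)"
proof (rule ccontr)
  let ?a = "first_reach y w"
  assume below: "\<not> w \<le> floor_sum y ?a"
  obtain b where b: "?a < b" "\<And>t. ?a < t \<Longrightarrow> t < b \<Longrightarrow> floor_sum y t = floor_sum y ?a"
    using eventually_floor_sum_at_right[of y ?a] unfolding eventually_at_right_field by blast
  have "b \<le> t" if "w \<le> floor_sum y t" for t
  proof -
    have "?a \<le> t" unfolding first_reach_def using that reach_set_bdd_below by (intro cInf_lower) auto
    moreover have "t \<noteq> ?a" using below that by auto
    ultimately show ?thesis using b(2)[of t] that below by force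
  qed
  then have "b \<le> ?a" unfolding first_reach_def using reach_set_nonempty by (intro cInf_greatest) auto
  then show False using b(1) by simp
qed

lemma first_reach_le_iff: "w \<le> floor_sum y t \<longleftrightarrow> first_reach y w \<le> t"
proof
  assume "w \<le> floor_sum y t"
  then show "first_reach y w \<le> t"
    unfolding first_reach_def using reach_set_bdd_below by (intro cInf_lower) auto
next
  assume "first_reach y w \<le> t"
  then show "w \<le> floor_sum y t"
    using floor_sum_mono[of "first_reach y w" t y] first_reach_attained[of w y] by simp
qed

lemma first_reach_unique:
  assumes "\<And>t. w \<le> floor_sum y t \<longleftrightarrow> a \<le> t"
  shows "first_reach y w = a"
proof (rule order.antisym)
  show "first_reach y w \<le> a" using assms[of a] first_reach_le_iff by simp
  show "a \<le> first_reach y w" using assms first_reach_attained by blast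
qed

lemma first_reach_mono: "w \<le> w' \<Longrightarrow> first_reach y w \<le> first_reach y w'"
  using first_reach_attained[of w' y] first_reach_le_iff[of w y "first_reach y w'"] by simp

lemma first_reach_add_period: "first_reach y (w + j * int n) = first_reach y w + of_int j"
proof (rule first_reach_unique)
  fix t
  have "floor_sum y t = floor_sum y (t - of_int j) + j * int n"
    using floor_sum_add_int[of y "t - of_int j" j] by simp
  then show "w + j * int n \<le> floor_sum y t \<longleftrightarrow> first_reach y w + of_int j \<le> t"
    using first_reach_le_iff[of w y "t - of_int j"] by auto
qed

lemma first_reach_cong: "(\<And>i. i < k \<Longrightarrow> y i = y' i) \<Longrightarrow> first_reach y = first_reach y'"
  unfolding first_reach_def[abs_def] by (subst floor_sum_cong) auto

lemma first_reach_add_const: "first_reach (\<lambda>i. y i + s) w = first_reach y w - s"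
proof (rule first_reach_unique)
  show "w \<le> floor_sum (\<lambda>i. y i + s) t \<longleftrightarrow> first_reach y w - s \<le> t" for t
    unfolding floor_sum_add_const first_reach_le_iff by linarith
qed

lemma first_reach_translate_int:
  "first_reach (\<lambda>i. y i + of_int (d i)) w = first_reach y (w - (\<Sum>i<k. int (L ! i) * d i))"
proof (rule first_reach_unique)
  show "w \<le> floor_sum (\<lambda>i. y i + of_int (d i)) t \<longleftrightarrow>
      first_reach y (w - (\<Sum>i<k. int (L ! i) * d i)) \<le> t" for t
    unfolding floor_sum_translate_int first_reach_le_iff[symmetric] by linarith
qed

lemma first_reach_lipschitz:
  assumes "\<And>i. i < k \<Longrightarrow> \<bar>y i - y' i\<bar> \<le> \<delta>"
  shows "\<bar>first_reach y w - first_reach y' w\<bar> \<le> \<delta>"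
proof -
  have "first_reach y' w \<le> first_reach y w + \<delta>" if le: "\<And>i. i < k \<Longrightarrow> y i \<le> y' i + \<delta>" for y y'
  proof -
    have "w \<le> floor_sum y (first_reach y w)" by (rule first_reach_attained)
    also have "\<dots> \<le> floor_sum y' (first_reach y w + \<delta>)" using le by (rule floor_sum_shift_le)
    finally show ?thesis by (simp add: first_reach_le_iff)
  qed
  moreover have "y i \<le> y' i + \<delta>" "y' i \<le> y i + \<delta>" if "i < k" for i
    using assms[OF that] by linarith+
  ultimately have "first_reach y' w \<le> first_reach y w + \<delta>" "first_reach y w \<le> first_reach y' w + \<delta>"
    by blast+
  then show ?thesis by linarith
qed

section \<open>Points of the tonnetz\<close>

text \<open>The coordinate of the vertex \<open>v\<close> is the time \<open>floor_sum y\<close> spends at the value \<open>v\<close>.\<close>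

definition tonn_coords :: "(nat \<Rightarrow> real) \<Rightarrow> nat \<Rightarrow> real" where
  "tonn_coords y v = (if v < n then first_reach y (int v + 1) - first_reach y (int v) else 0)"

lemma tonn_coords_mod: "tonn_coords y (nat (w mod int n)) = first_reach y (w + 1) - first_reach y w"
proof -
  define r where "r = w mod int n"
  have r: "0 \<le> r" "r < int n" using n_pos r_def by auto
  have w: "w = r + (w div int n) * int n" unfolding r_def by simp
  have "nat r < n" using r by linarith
  then have "tonn_coords y (nat r) = first_reach y (r + 1) - first_reach y r"
    unfolding tonn_coords_def using r by simp
  also have "\<dots> = first_reach y ((r + 1) + (w div int n) * int n) - first_reach y (r + (w div int n) * int n)"
    by (simp only: first_reach_add_period)
  also have "\<dots> = first_reach y (w + 1) - first_reach y w"
    using w by (simp add: algebra_simps)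
  finally show ?thesis unfolding r_def .
qed

lemma tonn_coords_nonneg: "0 \<le> tonn_coords y v"
  unfolding tonn_coords_def using first_reach_mono[of "int v" "int v + 1" y] by simp

lemma tonn_coords_support:
  assumes "tonn_coords y v \<noteq> 0"
  shows "v < n" and "floor_sum y (first_reach y (int v)) = int v"
proof -
  show v: "v < n" using assms unfolding tonn_coords_def by (auto split: if_splits)
  then have "first_reach y (int v) < first_reach y (int v + 1)"
    using assms first_reach_mono[of "int v" "int v + 1" y] unfolding tonn_coords_def by simp
  then have "\<not> int v + 1 \<le> floor_sum y (first_reach y (int v))"
    using first_reach_le_iff by (simp add: not_le)
  then show "floor_sum y (first_reach y (int v)) = int v"
    using first_reach_attained[of "int v" y] by simp
qed

lemma sum_tonn_coords: "(\<Sum>v<n. tonn_coords y v) = 1"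
proof -
  have "(\<Sum>v<n. tonn_coords y v) = (\<Sum>v<n. first_reach y (int (Suc v)) - first_reach y (int v))"
    unfolding tonn_coords_def by (intro sum.cong) (auto simp: add.commute)
  also have "\<dots> = first_reach y (int n) - first_reach y 0"
    by (subst sum_lessThan_telescope) simp
  also have "first_reach y (int n) = first_reach y 0 + 1"
    using first_reach_add_period[of y 0 1] by simp
  finally show ?thesis by simp
qed

definition psum :: "(nat \<Rightarrow> nat) \<Rightarrow> nat \<Rightarrow> nat" where
  "psum \<sigma> m = (\<Sum>j<m. L ! \<sigma> j)"

definition facet :: "nat \<Rightarrow> (nat \<Rightarrow> nat) \<Rightarrow> nat set" where
  "facet x \<sigma> = {(x + psum \<sigma> m) mod n | m. m < k}"

lemma facet_in_tonn_facets: "x < n \<Longrightarrow> \<sigma> permutes {..<k} \<Longrightarrow> facet x \<sigma> \<in> tonn_facets L"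
  unfolding tonn_facets_def facet_def psum_def by blast

lemma tonn_facets_eq_facet: "F \<in> tonn_facets L \<Longrightarrow> \<exists>x \<sigma>. x < n \<and> \<sigma> permutes {..<k} \<and> F = facet x \<sigma>"
  unfolding tonn_facets_def facet_def psum_def by blast

lemma facet_subset: "facet x \<sigma> \<subseteq> {..<n}"
  unfolding facet_def using n_pos by auto

lemma psum_zero [simp]: "psum \<sigma> 0 = 0"
  unfolding psum_def by simp

lemma psum_Suc: "psum \<sigma> (Suc m) = psum \<sigma> m + L ! \<sigma> m"
  unfolding psum_def by simp

lemma psum_k: "\<sigma> permutes {..<k} \<Longrightarrow> psum \<sigma> k = n"
  unfolding psum_def n_eq_sum using sum.permute[of \<sigma> "{..<k}" "\<lambda>i. L ! i"] by (simp add: comp_def)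

lemma psum_strict_mono:
  assumes "\<sigma> permutes {..<k}" "a < b" "b \<le> k"
  shows "psum \<sigma> a < psum \<sigma> b"
  using assms(2,3)
proof (induction b)
  case (Suc b)
  have "0 < L ! \<sigma> b" using nth_L_pos permutes_in_image[OF assms(1)] Suc.prems by simp
  then show ?case using Suc by (cases "a = b") (auto simp: psum_Suc)
qed simp

lemma psum_less_iff:
  assumes "\<sigma> permutes {..<k}" "a \<le> k" "b \<le> k"
  shows "psum \<sigma> a < psum \<sigma> b \<longleftrightarrow> a < b"
proof
  assume lt: "psum \<sigma> a < psum \<sigma> b"
  show "a < b"
  proof (rule ccontr)
    assume "\<not> a < b"
    then have "b = a \<or> b < a" by auto
    then show False using lt psum_strict_mono[OF assms(1), of b a] assms by auto
  qed
qed (use psum_strict_mono[OF assms(1)] assms in auto)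

lemma psum_less_n: "\<sigma> permutes {..<k} \<Longrightarrow> m < k \<Longrightarrow> psum \<sigma> m < n"
  using psum_strict_mono[of \<sigma> m k] psum_k by simp

lemma sum_threshold_sorted:
  fixes \<theta> :: "nat \<Rightarrow> 'a::order"
  assumes \<sigma>: "\<sigma> permutes {..<k}"
    and sorted: "\<And>a b. a \<le> b \<Longrightarrow> b < k \<Longrightarrow> \<theta> (\<sigma> a) \<le> \<theta> (\<sigma> b)"
  shows "(\<Sum>i | i < k \<and> \<theta> i \<le> t. L ! i) = psum \<sigma> (card {j. j < k \<and> \<theta> (\<sigma> j) \<le> t})"
proof -
  define A where "A = {j. j < k \<and> \<theta> (\<sigma> j) \<le> t}"
  have img: "\<sigma> ` A = {i. i < k \<and> \<theta> i \<le> t}"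
  proof
    show "\<sigma> ` A \<subseteq> {i. i < k \<and> \<theta> i \<le> t}"
      unfolding A_def using permutes_in_image[OF \<sigma>] by auto
    show "{i. i < k \<and> \<theta> i \<le> t} \<subseteq> \<sigma> ` A"
    proof
      fix i assume i: "i \<in> {i. i < k \<and> \<theta> i \<le> t}"
      then have "i \<in> \<sigma> ` {..<k}" using permutes_image[OF \<sigma>] by simp
      then obtain j where "j < k" "i = \<sigma> j" by auto
      then show "i \<in> \<sigma> ` A" using i unfolding A_def by auto
    qed
  qed
  have inj: "inj_on \<sigma> A" using permutes_inj[OF \<sigma>] by (simp add: inj_on_def)
  have "A = {..<card A}"
    unfolding A_def by (rule sorted_threshold_eq_lessThan) (rule sorted)
  then have "(\<Sum>j\<in>A. L ! \<sigma> j) = psum \<sigma> (card A)" unfolding psum_def by (metis lessThan_iff)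
  then show ?thesis
    using img sum.reindex[OF inj, of "\<lambda>i. L ! i"] unfolding A_def by simp
qed

lemma floor_sum_threshold:
  fixes \<theta> :: "nat \<Rightarrow> real"
  assumes "\<And>i. i < k \<Longrightarrow> \<lfloor>y i + t\<rfloor> = b i + (if \<theta> i \<le> t then 1 else 0)"
  shows "floor_sum y t = (\<Sum>i<k. int (L ! i) * b i) + int (\<Sum>i | i < k \<and> \<theta> i \<le> t. L ! i)"
proof -
  have "floor_sum y t = (\<Sum>i<k. int (L ! i) * b i + (if \<theta> i \<le> t then int (L ! i) else 0))"
    unfolding floor_sum_def using assms by (intro sum.cong) (auto simp: distrib_left)
  also have "\<dots> = (\<Sum>i<k. int (L ! i) * b i) + (\<Sum>i | i < k \<and> \<theta> i \<le> t. int (L ! i))"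
    by (simp add: sum.distrib sum.inter_filter[symmetric] lessThan_def)
  finally show ?thesis by simp
qed

lemma mod_psum_in_facet:
  assumes "\<sigma> permutes {..<k}" "m \<le> k"
  shows "(x + psum \<sigma> m) mod n \<in> facet x \<sigma>"
proof (cases "m < k")
  case False
  then have "(x + psum \<sigma> m) mod n = (x + psum \<sigma> 0) mod n" using assms psum_k by simp
  then show ?thesis unfolding facet_def using k_pos by blast
qed (auto simp: facet_def)

lemma floor_sum_in_facet:
  assumes \<sigma>: "\<sigma> permutes {..<k}"
    and sorted: "\<And>a b. a \<le> b \<Longrightarrow> b < k \<Longrightarrow> 1 - frac (y (\<sigma> a)) \<le> 1 - frac (y (\<sigma> b))"
  shows "nat (floor_sum y t mod int n) \<in> facet (nat (floor_sum y 0 mod int n)) \<sigma>"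
proof -
  define m where "m = card {j. j < k \<and> 1 - frac (y (\<sigma> j)) \<le> frac t}"
  have "m \<le> k" unfolding m_def by (rule order.trans[OF card_mono[of "{..<k}"]]) auto
  have "\<lfloor>y i + frac t\<rfloor> = \<lfloor>y i\<rfloor> + (if 1 - frac (y i) \<le> frac t then 1 else 0)" for i
    by (rule floor_add_window) (simp_all add: frac_lt_1)
  then have "floor_sum y (frac t) = floor_sum y 0 + int (psum \<sigma> m)"
    using floor_sum_threshold[of y "frac t" "\<lambda>i. \<lfloor>y i\<rfloor>" "\<lambda>i. 1 - frac (y i)"]
      sum_threshold_sorted[of \<sigma> "\<lambda>i. 1 - frac (y i)", OF \<sigma> sorted]
    unfolding m_def by (simp add: floor_sum_def)
  moreover have "floor_sum y t = floor_sum y (frac t) + \<lfloor>t\<rfloor> * int n"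
    using floor_sum_add_int[of y "frac t" "\<lfloor>t\<rfloor>"] by (simp add: frac_def)
  ultimately have "nat (floor_sum y t mod int n) = (nat (floor_sum y 0 mod int n) + psum \<sigma> m) mod n"
    using nat_mod_add_mult[OF n_pos] by simp
  then show ?thesis using mod_psum_in_facet[OF \<sigma> \<open>m \<le> k\<close>] by simp
qed

lemma tonn_coords_in_realization: "tonn_coords y \<in> geom_realization (tonnetz L)"
proof -
  obtain \<sigma> where \<sigma>: "\<sigma> permutes {..<k}"
    and sorted: "\<And>a b. a \<le> b \<Longrightarrow> b < k \<Longrightarrow> 1 - frac (y (\<sigma> a)) \<le> 1 - frac (y (\<sigma> b))"
    using exists_sorting_permutation[of k "\<lambda>i. 1 - frac (y i)"] by blast
  define S where "S = facet (nat (floor_sum y 0 mod int n)) \<sigma>"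
  have "nat (floor_sum y 0 mod int n) < n" using n_pos by (simp add: nat_less_iff)
  then have "S \<in> tonn_facets L" unfolding S_def using facet_in_tonn_facets \<sigma> by blast
  moreover have "S \<noteq> {}" unfolding S_def facet_def using k_pos by blast
  ultimately have S: "S \<in> tonnetz L" unfolding tonnetz_def by blast
  have supp: "{v. tonn_coords y v \<noteq> 0} \<subseteq> S"
  proof
    fix v assume "v \<in> {v. tonn_coords y v \<noteq> 0}"
    then have "nat (floor_sum y (first_reach y (int v)) mod int n) = v"
      using tonn_coords_support[of y v] by simp
    then show "v \<in> S" unfolding S_def using floor_sum_in_facet[of \<sigma> y, OF \<sigma> sorted] by metis
  qed
  have "sum (tonn_coords y) S = (\<Sum>v<n. tonn_coords y v)"
    by (rule sum.mono_neutral_left) (use supp facet_subset[of _ \<sigma>] in \<open>auto simp: S_def\<close>)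
  then have "sum (tonn_coords y) S = 1" using sum_tonn_coords by simp
  moreover have "finite S" using facet_subset finite_subset unfolding S_def by blast
  ultimately show ?thesis
    unfolding geom_realization_def using tonn_coords_nonneg S supp by blast
qed

lemma tonn_coords_cong: "(\<And>i. i < k \<Longrightarrow> y i = y' i) \<Longrightarrow> tonn_coords y = tonn_coords y'"
proof -
  assume "\<And>i. i < k \<Longrightarrow> y i = y' i"
  then have eq: "first_reach y = first_reach y'" by (rule first_reach_cong)
  show "tonn_coords y = tonn_coords y'" unfolding tonn_coords_def eq ..
qed

lemma tonn_coords_add_const: "tonn_coords (\<lambda>i. y i + s) = tonn_coords y"
  by (rule ext) (simp add: tonn_coords_def first_reach_add_const)

lemma tonn_coords_translate_int:
  assumes "(\<Sum>i<k. int (L ! i) * d i) = j * int n"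
  shows "tonn_coords (\<lambda>i. y i + of_int (d i)) = tonn_coords y"
proof
  fix v
  have "first_reach y (w - j * int n) = first_reach y w - of_int j" for w
    using first_reach_add_period[of y "w - j * int n" j] by simp
  then show "tonn_coords (\<lambda>i. y i + of_int (d i)) v = tonn_coords y v"
    unfolding tonn_coords_def first_reach_translate_int assms by simp
qed

lemma realization_vanishes: "x \<in> geom_realization (tonnetz L) \<Longrightarrow> n \<le> i \<Longrightarrow> x i = 0"
  unfolding geom_realization_def tonnetz_def
  using tonn_facets_eq_facet facet_subset by fastforce

section \<open>Genericity: the fibres are lattice cosets\<close>

lemma first_reach_eq_shift:
  assumes "\<And>w. first_reach y' (w + 1) - first_reach y' w = first_reach y (w + 1) - first_reach y w"
  shows "first_reach y' w = first_reach y w + (first_reach y' 0 - first_reach y 0)"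
proof (induction w rule: int_induct[where k = 0])
  case (step1 i)
  then show ?case using assms[of i] by linarith
next
  case (step2 i)
  then show ?case using assms[of "i - 1"] by simp
qed simp

lemma floor_sum_eq_imp_Ints:
  assumes "generic L" and eq: "floor_sum y = floor_sum z" and "i < k"
  shows "z i - y i \<in> \<int>"
proof -
  \<comment> \<open>The jumps of \<open>floor_sum y\<close> and \<open>floor_sum z\<close> at time \<open>- y i\<close> agree; by genericity the sets
    of coordinates causing them agree, and \<open>i\<close> is one of them for \<open>y\<close>.\<close>
  define I where "I = {j. j < k \<and> y j + - y i \<in> \<int>}"
  define J where "J = {j. j < k \<and> z j + - y i \<in> \<int>}"
  have "\<forall>\<^sub>F t in at_left (- y i).
      floor_sum y t = floor_sum y (- y i) - (\<Sum>j\<in>I. int (L ! j)) \<and>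
      floor_sum z t = floor_sum z (- y i) - (\<Sum>j\<in>J. int (L ! j))"
    unfolding I_def J_def by (intro eventually_conj eventually_floor_sum_at_left)
  then obtain t where "floor_sum y t = floor_sum y (- y i) - (\<Sum>j\<in>I. int (L ! j))"
    "floor_sum z t = floor_sum z (- y i) - (\<Sum>j\<in>J. int (L ! j))"
    using eventually_happens'[OF trivial_limit_at_left_real] by auto
  then have "(\<Sum>j\<in>I. L ! j) = (\<Sum>j\<in>J. L ! j)"
    using eq by (simp flip: of_nat_sum)
  moreover have "I \<subseteq> {..<k}" "J \<subseteq> {..<k}" unfolding I_def J_def by auto
  ultimately have "I = J" using \<open>generic L\<close> unfolding generic_def by blast
  moreover have "i \<in> I" unfolding I_def using \<open>i < k\<close> by simp
  ultimately have "z i + - y i \<in> \<int>" unfolding J_def by blast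
  then show ?thesis by simp
qed

lemma floor_sum_eq_if_first_reach_eq:
  assumes "\<And>w. first_reach z w = first_reach y w"
  shows "floor_sum z = floor_sum y"
proof
  fix t
  have "floor_sum y t \<le> floor_sum z t" "floor_sum z t \<le> floor_sum y t"
    using first_reach_le_iff[of "floor_sum y t" z t] first_reach_le_iff[of "floor_sum y t" y t]
      first_reach_le_iff[of "floor_sum z t" z t] first_reach_le_iff[of "floor_sum z t" y t] assms
    by simp_all
  then show "floor_sum z t = floor_sum y t" by simp
qed

lemma tonn_coords_eq_imp_translate:
  assumes "generic L" and eq: "tonn_coords y = tonn_coords y'"
  shows "\<exists>s d. (\<forall>i<k. y' i = y i + s + of_int (d i)) \<and> (\<Sum>i<k. int (L ! i) * d i) = 0"
proof -
  define s where "s = first_reach y' 0 - first_reach y 0"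
  define z where "z = (\<lambda>i. y' i + s)"
  have "first_reach y' (w + 1) - first_reach y' w = first_reach y (w + 1) - first_reach y w" for w
    using tonn_coords_mod[of y w] tonn_coords_mod[of y' w] eq by simp
  then have "first_reach z w = first_reach y w" for w
    using first_reach_eq_shift[of y' y w] first_reach_add_const[of y' s w] unfolding z_def s_def
    by simp
  then have Gz: "floor_sum z = floor_sum y" by (rule floor_sum_eq_if_first_reach_eq)
  define d where "d i = \<lfloor>z i - y i\<rfloor>" for i
  have z: "z i = y i + of_int (d i)" if "i < k" for i
  proof -
    have "z i - y i \<in> \<int>" using floor_sum_eq_imp_Ints[OF \<open>generic L\<close> Gz[symmetric] that] .
    then show ?thesis unfolding d_def by (metis Ints_cases diff_add_cancel floor_of_int add.commute)
  qed
  have "floor_sum z 0 = floor_sum (\<lambda>i. y i + of_int (d i)) 0"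
    using z by (intro fun_cong[OF floor_sum_cong]) simp
  then have "(\<Sum>i<k. int (L ! i) * d i) = 0" using Gz floor_sum_translate_int[of y d 0] by simp
  moreover have "\<forall>i<k. y' i = y i + - s + of_int (d i)" using z unfolding z_def by (simp add: algebra_simps)
  ultimately show ?thesis by blast
qed

section \<open>Reducedness: surjectivity\<close>

text \<open>A point of the facet \<open>\<Delta>(x0;\<sigma>)\<close> is reached by the staircase below: its coordinate \<open>\<sigma> j\<close>
  jumps at time \<open>c j\<close>, so during \<open>[c (m - 1), c m)\<close> the floor sum sits at the \<open>m\<close>-th vertex
  \<open>x0 + psum \<sigma> m\<close>; the integer offsets \<open>e\<close>, which exist by Bezout, make it start at \<open>x0\<close>.\<close>

context
  fixes x0 :: nat and \<sigma> :: "nat \<Rightarrow> nat" and c :: "nat \<Rightarrow> real" and e :: "nat \<Rightarrow> int"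
  assumes x0: "x0 < n"
    and \<sigma>: "\<sigma> permutes {..<k}"
    and c_mono: "\<And>a b. a \<le> b \<Longrightarrow> c a \<le> c b"
    and c_nonneg: "0 \<le> c 0"
    and c_last: "c (k - 1) = 1"
    and e: "(\<Sum>i<k. int (L ! i) * e i) = int x0 + int n"
begin

definition staircase :: "nat \<Rightarrow> real" where
  "staircase i = of_int (e i) - c (inv \<sigma> i)"

lemma jump_time_bounds: "j < k \<Longrightarrow> 0 \<le> c j \<and> c j \<le> 1"
  using c_mono[of 0 j] c_mono[of j "k - 1"] c_nonneg c_last by auto

lemma less_card_jumped_iff: "j < k \<Longrightarrow> j < card {j. j < k \<and> c j \<le> t} \<longleftrightarrow> c j \<le> t"
  using sorted_threshold_eq_lessThan[of k c t] c_mono by (metis (no_types, lifting) lessThan_iff mem_Collect_eq)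

lemma card_jumped_less:
  assumes "t < 1"
  shows "card {j. j < k \<and> c j \<le> t} < k"
proof -
  have "{j. j < k \<and> c j \<le> t} \<subseteq> {..<k - 1}"
  proof
    fix j assume j: "j \<in> {j. j < k \<and> c j \<le> t}"
    then have "j \<noteq> k - 1" using c_last assms by auto
    moreover have "j < k" using j by simp
    ultimately show "j \<in> {..<k - 1}" by simp
  qed
  then have "card {j. j < k \<and> c j \<le> t} \<le> k - 1"
    using card_mono[of "{..<k - 1}"] by simp
  then show ?thesis using k_pos by linarith
qed

lemma floor_sum_staircase:
  assumes "0 \<le> t" "t < 1"
  shows "floor_sum staircase t = int x0 + int (psum \<sigma> (card {j. j < k \<and> c j \<le> t}))"
proof -
  have fl: "\<lfloor>staircase i + t\<rfloor> = (e i - 1) + (if c (inv \<sigma> i) \<le> t then 1 else 0)" if "i < k" for i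
    using jump_time_bounds[of "inv \<sigma> i"] permutes_in_image[OF permutes_inv[OF \<sigma>]] that assms
    unfolding staircase_def by (auto simp: floor_eq_iff)
  have "(\<Sum>i<k. int (L ! i) * (e i - 1)) = int x0"
    using e n_eq_sum by (simp add: right_diff_distrib sum_subtractf)
  moreover have "(\<Sum>i | i < k \<and> c (inv \<sigma> i) \<le> t. L ! i) = psum \<sigma> (card {j. j < k \<and> c j \<le> t})"
    using sum_threshold_sorted[of \<sigma> "\<lambda>i. c (inv \<sigma> i)" t] \<sigma> c_mono permutes_inverses(2)[OF \<sigma>]
    by simp
  ultimately show ?thesis
    using floor_sum_threshold[of staircase t "\<lambda>i. e i - 1" "\<lambda>i. c (inv \<sigma> i)", OF fl] by simp
qed

lemma floor_sum_staircase_neg: "t < 0 \<Longrightarrow> floor_sum staircase t < int x0"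
proof -
  assume "t < 0"
  define s where "s = max t (- 1/2)"
  have "floor_sum staircase t \<le> floor_sum staircase s" unfolding s_def by (intro floor_sum_mono) simp
  also have "\<dots> = floor_sum staircase (s + 1) - int n"
    using floor_sum_add_int[of staircase s 1] by simp
  also have "\<dots> < int x0"
    using \<open>t < 0\<close> floor_sum_staircase[of "s + 1"] psum_less_n[OF \<sigma> card_jumped_less[of "s + 1"]]
    unfolding s_def by simp
  finally show ?thesis .
qed

lemma floor_sum_staircase_nonneg: "0 \<le> t \<Longrightarrow> int x0 \<le> floor_sum staircase t"
  using floor_sum_mono[of 0 t staircase] floor_sum_staircase[of 0] by simp

lemma floor_sum_staircase_ge: "1 \<le> t \<Longrightarrow> int x0 + int n \<le> floor_sum staircase t"
  using floor_sum_mono[of 1 t staircase] floor_sum_add_int[of staircase 0 1]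
    floor_sum_staircase_nonneg[of 0] by simp

lemma first_reach_staircase_x0: "first_reach staircase (int x0) = 0"
proof (rule first_reach_unique)
  show "int x0 \<le> floor_sum staircase t \<longleftrightarrow> 0 \<le> t" for t
    using floor_sum_staircase_neg[of t] floor_sum_staircase_nonneg[of t] by (cases "t < 0") auto
qed

lemma first_reach_staircase:
  assumes m: "m < k" and w: "int x0 + int (psum \<sigma> m) < w" "w \<le> int x0 + int (psum \<sigma> (Suc m))"
  shows "first_reach staircase w = c m"
proof (rule first_reach_unique)
  fix t :: real
  consider "t < 0" | "0 \<le> t" "t < 1" | "1 \<le> t" by linarith
  then show "w \<le> floor_sum staircase t \<longleftrightarrow> c m \<le> t"
  proof cases
    case 1
    then show ?thesis using floor_sum_staircase_neg w jump_time_bounds[OF m] by force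
  next
    case 2
    define M where "M = card {j. j < k \<and> c j \<le> t}"
    have "M \<le> k" using card_jumped_less[OF 2(2)] unfolding M_def by simp
    have "w \<le> int x0 + int (psum \<sigma> M) \<longleftrightarrow> m < M"
      using psum_less_iff[OF \<sigma>, of m M] psum_less_iff[OF \<sigma>, of M "Suc m"] m w \<open>M \<le> k\<close> by force
    then show ?thesis using floor_sum_staircase[OF 2] less_card_jumped_iff[OF m] unfolding M_def by simp
  next
    case 3
    have "psum \<sigma> (Suc m) \<le> n" using psum_less_iff[OF \<sigma>, of k "Suc m"] psum_k[OF \<sigma>] m by force
    then show ?thesis using floor_sum_staircase_ge[OF 3] w jump_time_bounds[OF m] 3 by simp
  qed
qed

lemma tonn_coords_staircase_vertex:
  assumes m: "m < k"
  shows "tonn_coords staircase ((x0 + psum \<sigma> m) mod n) = c m - (if m = 0 then 0 else c (m - 1))"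
proof -
  define w where "w = int (x0 + psum \<sigma> m)"
  have "(x0 + psum \<sigma> m) mod n = nat (w mod int n)" unfolding w_def by (simp only: zmod_int[symmetric] nat_int)
  then have "tonn_coords staircase ((x0 + psum \<sigma> m) mod n) =
      first_reach staircase (w + 1) - first_reach staircase w"
    by (simp add: tonn_coords_mod)
  moreover have "first_reach staircase (w + 1) = c m"
  proof (rule first_reach_staircase[OF m])
    have "0 < L ! \<sigma> m" using nth_L_pos permutes_in_image[OF \<sigma>] m by simp
    then show "w + 1 \<le> int x0 + int (psum \<sigma> (Suc m))" unfolding w_def psum_Suc by simp
  qed (simp add: w_def)
  moreover have "first_reach staircase w = (if m = 0 then 0 else c (m - 1))"
  proof (cases m)
    case 0
    then show ?thesis using first_reach_staircase_x0 by (simp add: w_def)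
  next
    case (Suc m')
    have "psum \<sigma> m' < psum \<sigma> m" using Suc m by (intro psum_strict_mono[OF \<sigma>]) auto
    then have "first_reach staircase w = c m'"
      using Suc m unfolding w_def by (intro first_reach_staircase) auto
    then show ?thesis using Suc by simp
  qed
  ultimately show ?thesis by simp
qed

lemma tonn_coords_staircase_outside:
  assumes v: "v \<notin> facet x0 \<sigma>"
  shows "tonn_coords staircase v = 0"
proof (cases "v < n")
  case True
  define r where "r = (v + n - x0) mod n"
  have "r < n" unfolding r_def using n_pos by simp
  have "(x0 + r) mod n = (x0 + (v + n - x0)) mod n" unfolding r_def by (simp add: mod_add_right_eq)
  also have "x0 + (v + n - x0) = v + n" using x0 by simp
  finally have "(x0 + r) mod n = v" using True by simp
  obtain m where m: "m < k" "psum \<sigma> m \<le> r" "r < psum \<sigma> (Suc m)"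
    using nat_step_interval[of "psum \<sigma>" r k] psum_k[OF \<sigma>] \<open>r < n\<close> by auto
  have "r \<noteq> psum \<sigma> m" using v m(1) \<open>(x0 + r) mod n = v\<close> unfolding facet_def by blast
  define w where "w = int (x0 + r)"
  have "nat (w mod int n) = v"
    using \<open>(x0 + r) mod n = v\<close> unfolding w_def by (simp only: zmod_int[symmetric] nat_int)
  then have "tonn_coords staircase v = first_reach staircase (w + 1) - first_reach staircase w"
    using tonn_coords_mod[of staircase w] by simp
  also have "\<dots> = 0"
    using m \<open>r \<noteq> psum \<sigma> m\<close> unfolding w_def by (simp add: first_reach_staircase)
  finally show ?thesis .
qed (simp add: tonn_coords_def)

end

lemma facet_eq_image: "facet x \<sigma> = (\<lambda>m. (x + psum \<sigma> m) mod n) ` {..<k}"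
  unfolding facet_def by auto

lemma inj_on_facet_vertices:
  assumes "\<sigma> permutes {..<k}"
  shows "inj_on (\<lambda>m. (x + psum \<sigma> m) mod n) {..<k}"
proof (rule inj_onI)
  fix a b assume ab: "a \<in> {..<k}" "b \<in> {..<k}" "(x + psum \<sigma> a) mod n = (x + psum \<sigma> b) mod n"
  then have "psum \<sigma> a = psum \<sigma> b"
    using add_mod_cancel_less[of "psum \<sigma> a" n "psum \<sigma> b" x] psum_less_n[OF assms] by simp
  then show "a = b" using psum_less_iff[OF assms, of a b] psum_less_iff[OF assms, of b a] ab by auto
qed

lemma tonn_coords_staircase:
  assumes x0: "x0 < n" and \<sigma>: "\<sigma> permutes {..<k}" and nonneg: "\<And>v. 0 \<le> x v"
    and supp: "\<And>v. x v \<noteq> 0 \<Longrightarrow> v \<in> facet x0 \<sigma>"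
    and sum1: "(\<Sum>m<k. x ((x0 + psum \<sigma> m) mod n)) = 1"
    and e: "(\<Sum>i<k. int (L ! i) * e i) = int x0 + int n"
  shows "tonn_coords (staircase \<sigma> (\<lambda>m. \<Sum>j<Suc m. x ((x0 + psum \<sigma> j) mod n)) e) = x"
proof
  define c where "c = (\<lambda>m. \<Sum>j<Suc m. x ((x0 + psum \<sigma> j) mod n))"
  have c_mono: "c a \<le> c b" if "a \<le> b" for a b
    unfolding c_def using that nonneg by (intro sum_mono2) auto
  have "0 \<le> c 0" "c (k - 1) = 1" unfolding c_def using nonneg sum1 k_pos by simp_all
  note staircase = x0 \<sigma> c_mono this e
  fix v
  show "tonn_coords (staircase \<sigma> c e) v = x v"
  proof (cases "v \<in> facet x0 \<sigma>")
    case True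
    then obtain m where m: "m < k" "v = (x0 + psum \<sigma> m) mod n" unfolding facet_def by blast
    have "x v = c m - (if m = 0 then 0 else c (m - 1))"
      unfolding c_def m(2) by (cases m) simp_all
    then show ?thesis using tonn_coords_staircase_vertex[OF staircase m(1)] m(2) by simp
  next
    case False
    then show ?thesis using tonn_coords_staircase_outside[OF staircase False] supp by fastforce
  qed
qed

lemma tonn_coords_surj:
  assumes "reduced L" and x: "x \<in> geom_realization (tonnetz L)"
  shows "\<exists>y. tonn_coords y = x"
proof -
  obtain S where nonneg: "\<And>v. 0 \<le> x v"
    and S: "S \<in> tonnetz L" "{v. x v \<noteq> 0} \<subseteq> S" "sum x S = 1"
    using x unfolding geom_realization_def by blast
  obtain x0 \<sigma> where x0: "x0 < n" and \<sigma>: "\<sigma> permutes {..<k}" and SF: "S \<subseteq> facet x0 \<sigma>"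
    using S(1) tonn_facets_eq_facet unfolding tonnetz_def by blast
  have "(\<Sum>m<k. x ((x0 + psum \<sigma> m) mod n)) = sum x (facet x0 \<sigma>)"
    unfolding facet_eq_image by (simp add: sum.reindex[OF inj_on_facet_vertices[OF \<sigma>]])
  also have "\<dots> = sum x S"
    by (rule sum.mono_neutral_right) (use S(2) SF in \<open>auto simp: facet_eq_image\<close>)
  finally have sum1: "(\<Sum>m<k. x ((x0 + psum \<sigma> m) mod n)) = 1" using S(3) by simp
  obtain d where d: "(\<Sum>i<k. int (L ! i) * d i) = 1"
    using Gcd_set_Bezout[of L] \<open>reduced L\<close> unfolding reduced_def by auto
  have "(\<Sum>i<k. int (L ! i) * ((int x0 + int n) * d i)) = (int x0 + int n) * (\<Sum>i<k. int (L ! i) * d i)"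
    unfolding sum_distrib_left by (simp add: mult.left_commute)
  then have e: "(\<Sum>i<k. int (L ! i) * ((int x0 + int n) * d i)) = int x0 + int n" using d by simp
  have supp: "\<And>v. x v \<noteq> 0 \<Longrightarrow> v \<in> facet x0 \<sigma>" using S(2) SF by blast
  show ?thesis using tonn_coords_staircase[OF x0 \<sigma> nonneg supp sum1 e] by blast
qed

section \<open>The tonnetz as a lattice quotient\<close>

text \<open>Path lifting for covering spaces is available only between normed vector spaces, so both
  \<open>\<real>\<^sup>k\<^sup>-\<^sup>1\<close> (coordinates with last entry \<open>0\<close>) and the geometric realization are placed inside
  the Banach space of bounded sequences.\<close>

definition coord_space :: "(nat \<Rightarrow>\<^sub>C real) set" where
  "coord_space = {y. \<forall>i. k - 1 \<le> i \<longrightarrow> apply_bcontfun y i = 0}"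

definition deck :: "(nat \<Rightarrow>\<^sub>C real) set" where
  "deck = {l \<in> coord_space. (\<forall>i. apply_bcontfun l i \<in> \<int>) \<and>
      int n dvd (\<Sum>i<k. int (L ! i) * \<lfloor>apply_bcontfun l i\<rfloor>)}"

definition tonn_map :: "(nat \<Rightarrow>\<^sub>C real) \<Rightarrow> nat \<Rightarrow>\<^sub>C real" where
  "tonn_map y = trunc_bcontfun n (tonn_coords (apply_bcontfun y))"

definition tonn_space :: "(nat \<Rightarrow>\<^sub>C real) set" where
  "tonn_space = trunc_bcontfun n ` geom_realization (tonnetz L)"

lemma apply_tonn_map: "apply_bcontfun (tonn_map y) = tonn_coords (apply_bcontfun y)"
  unfolding tonn_map_def by (rule ext) (simp add: tonn_coords_def)

lemma coord_space_add: "y \<in> coord_space \<Longrightarrow> z \<in> coord_space \<Longrightarrow> y + z \<in> coord_space"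
  and coord_space_diff: "y \<in> coord_space \<Longrightarrow> z \<in> coord_space \<Longrightarrow> y - z \<in> coord_space"
  and coord_space_scaleR: "y \<in> coord_space \<Longrightarrow> a *\<^sub>R y \<in> coord_space"
  unfolding coord_space_def by simp_all

lemma convex_coord_space: "convex coord_space"
  unfolding convex_def using coord_space_add coord_space_scaleR by blast

lemma closed_coord_space: "closed coord_space"
  unfolding coord_space_def
  by (intro closed_Collect_all closed_Collect_imp closed_Collect_eq continuous_on_apply_bcontfun_at_point)
    auto

lemma deck_subset: "deck \<subseteq> coord_space"
  unfolding deck_def by blast

lemma zero_in_deck: "0 \<in> deck"
  unfolding deck_def coord_space_def by simp

lemma deck_diff:
  assumes "l \<in> deck" "m \<in> deck"
  shows "l - m \<in> deck"
proof -
  have "\<lfloor>apply_bcontfun (l - m) i\<rfloor> = \<lfloor>apply_bcontfun l i\<rfloor> - \<lfloor>apply_bcontfun m i\<rfloor>" for i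
  proof -
    have "apply_bcontfun l i \<in> \<int>" "apply_bcontfun m i \<in> \<int>"
      using assms unfolding deck_def by blast+
    then obtain a b where "apply_bcontfun l i = of_int a" "apply_bcontfun m i = of_int b"
      by (elim Ints_cases)
    then show ?thesis by simp
  qed
  then have "(\<Sum>i<k. int (L ! i) * \<lfloor>apply_bcontfun (l - m) i\<rfloor>) =
      (\<Sum>i<k. int (L ! i) * \<lfloor>apply_bcontfun l i\<rfloor>) - (\<Sum>i<k. int (L ! i) * \<lfloor>apply_bcontfun m i\<rfloor>)"
    by (simp add: right_diff_distrib sum_subtractf)
  then show ?thesis using assms coord_space_diff unfolding deck_def by auto
qed

lemma tonn_map_add_deck:
  assumes "l \<in> deck"
  shows "tonn_map (y + l) = tonn_map y"
proof -
  define d where "d i = \<lfloor>apply_bcontfun l i\<rfloor>" for i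
  have "int n dvd (\<Sum>i<k. int (L ! i) * d i)" using assms unfolding deck_def d_def by blast
  then obtain j where j: "(\<Sum>i<k. int (L ! i) * d i) = j * int n"
    by (metis dvdE mult.commute)
  have "apply_bcontfun (y + l) = (\<lambda>i. apply_bcontfun y i + of_int (d i))"
    using assms unfolding deck_def d_def by (auto elim!: Ints_cases)
  then show ?thesis unfolding tonn_map_def using tonn_coords_translate_int[OF j] by simp
qed

lemma tonn_map_eq_imp_deck:
  assumes "generic L" and y: "y \<in> coord_space" and z: "z \<in> coord_space"
    and eq: "tonn_map y = tonn_map z"
  shows "z - y \<in> deck"
proof -
  have "tonn_coords (apply_bcontfun y) = tonn_coords (apply_bcontfun z)"
    using arg_cong[OF eq, of apply_bcontfun] by (simp add: apply_tonn_map)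
  then obtain s d where sd: "\<forall>i<k. apply_bcontfun z i = apply_bcontfun y i + s + of_int (d i)"
    and sum0: "(\<Sum>i<k. int (L ! i) * d i) = 0"
    using tonn_coords_eq_imp_translate[OF \<open>generic L\<close>] by blast
  have last: "apply_bcontfun z (k - 1) = 0" "apply_bcontfun y (k - 1) = 0"
    using y z unfolding coord_space_def by auto
  have diff: "apply_bcontfun (z - y) i = of_int (d i - d (k - 1))" if "i < k" for i
    using sd that last k_pos by (simp add: algebra_simps)
  have Ints: "apply_bcontfun (z - y) i \<in> \<int>" for i
    using diff coord_space_diff[OF z y] unfolding coord_space_def
    by (cases "i < k") (auto simp: not_less)
  have "(\<Sum>i<k. int (L ! i) * \<lfloor>apply_bcontfun (z - y) i\<rfloor>) =
      (\<Sum>i<k. int (L ! i) * d i) - (\<Sum>i<k. int (L ! i)) * d (k - 1)"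
    using diff by (simp add: right_diff_distrib sum_subtractf sum_distrib_right)
  also have "\<dots> = - (int n * d (k - 1))" using sum0 n_eq_sum by simp
  finally show ?thesis unfolding deck_def using coord_space_diff[OF z y] Ints by simp
qed

lemma deck_separated:
  assumes "l \<in> deck" "m \<in> deck" "l \<noteq> m"
  shows "1 \<le> dist l m"
proof (rule ccontr)
  assume "\<not> 1 \<le> dist l m"
  then have "\<bar>apply_bcontfun (l - m) i\<bar> < 1" for i
    using norm_bounded[of "l - m" i] by (simp add: dist_norm)
  moreover have "apply_bcontfun (l - m) i \<in> \<int>" for i
    using deck_diff[OF assms(1,2)] unfolding deck_def by blast
  ultimately have "apply_bcontfun (l - m) i = 0" for i
  proof -
    obtain z where z: "apply_bcontfun (l - m) i = of_int z"
      using \<open>apply_bcontfun (l - m) i \<in> \<int>\<close> by (elim Ints_cases)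
    then have "real_of_int \<bar>z\<bar> < 1" using \<open>\<bar>apply_bcontfun (l - m) i\<bar> < 1\<close> by simp
    then show ?thesis using z by simp
  qed
  then have "l - m = 0" by (intro bcontfun_eqI) simp
  then show False using assms(3) by simp
qed

lemma continuous_on_tonn_map: "continuous_on S tonn_map"
proof (rule lipschitz_on_continuous_on[of "2 * real n"], rule lipschitz_onI)
  fix y z
  have lip: "\<bar>first_reach (apply_bcontfun y) w - first_reach (apply_bcontfun z) w\<bar> \<le> dist y z" for w
    by (rule first_reach_lipschitz) (simp add: dist_norm abs_apply_bcontfun_diff_le)
  have "\<bar>tonn_coords (apply_bcontfun y) v - tonn_coords (apply_bcontfun z) v\<bar> \<le> 2 * dist y z" for v
    unfolding tonn_coords_def using lip[of "int v"] lip[of "int v + 1"] by (auto simp: abs_le_iff)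
  then have "norm (tonn_map y - tonn_map z) \<le> (\<Sum>v<n. 2 * dist y z)"
    unfolding tonn_map_def by (intro order.trans[OF norm_trunc_bcontfun_diff] sum_mono)
  then show "dist (tonn_map y) (tonn_map z) \<le> 2 * real n * dist y z"
    by (simp add: dist_norm)
qed simp

lemma tonn_map_image:
  assumes "reduced L"
  shows "tonn_map ` coord_space = tonn_space"
proof
  show "tonn_map ` coord_space \<subseteq> tonn_space"
    unfolding tonn_map_def tonn_space_def using tonn_coords_in_realization by blast
  show "tonn_space \<subseteq> tonn_map ` coord_space"
  proof
    fix x' assume "x' \<in> tonn_space"
    then obtain x where x: "x \<in> geom_realization (tonnetz L)" "x' = trunc_bcontfun n x"
      unfolding tonn_space_def by blast
    obtain y where y: "tonn_coords y = x" using tonn_coords_surj[OF assms x(1)] by blast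
    define z where "z = trunc_bcontfun (k - 1) (\<lambda>i. y i - y (k - 1))"
    have "z \<in> coord_space" unfolding z_def coord_space_def by simp
    moreover have "tonn_coords (apply_bcontfun z) = tonn_coords (\<lambda>i. y i + - y (k - 1))"
    proof (rule tonn_coords_cong)
      fix i assume "i < k"
      then show "apply_bcontfun z i = y i + - y (k - 1)"
      proof (cases "i < k - 1")
        case False
        then have "i = k - 1" using \<open>i < k\<close> by linarith
        then show ?thesis unfolding z_def by simp
      qed (simp add: z_def)
    qed
    then have "tonn_map z = x'" unfolding tonn_map_def tonn_coords_add_const y x(2) by simp
    ultimately show "x' \<in> tonn_map ` coord_space" by blast
  qed
qed

lemma deck_cocompact: "\<exists>K. compact K \<and> (\<forall>z\<in>coord_space. \<exists>l\<in>deck. z - l \<in> K)"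
proof (intro exI conjI ballI)
  define B where "B = Pi\<^sub>E UNIV (\<lambda>i. if i < k - 1 then {0..real n} else {0})"
  have "compactin (product_topology (\<lambda>i. euclidean) UNIV) B"
    unfolding B_def compactin_PiE by auto
  then show "compact (trunc_bcontfun (k - 1) ` B)"
    by (intro compact_continuous_image continuous_on_trunc_bcontfun)
      (simp add: euclidean_product_topology)
  fix z assume z: "z \<in> coord_space"
  define l where "l = trunc_bcontfun (k - 1) (\<lambda>i. of_int (int n * \<lfloor>apply_bcontfun z i / real n\<rfloor>))"
  have "\<lfloor>real n * real_of_int m\<rfloor> = int n * m" for m
    using floor_of_int[of "int n * m"] by simp
  then have "l \<in> deck"
    unfolding deck_def coord_space_def l_def by (auto intro!: dvd_sum)
  moreover have "z - l = trunc_bcontfun (k - 1) (apply_bcontfun (z - l))"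
    using z unfolding coord_space_def l_def by (intro bcontfun_eqI) simp
  moreover have "apply_bcontfun (z - l) \<in> B"
  proof -
    have "0 \<le> a - real n * of_int \<lfloor>a / real n\<rfloor> \<and> a - real n * of_int \<lfloor>a / real n\<rfloor> \<le> real n" for a
      using n_pos floor_divide_lower[of "real n" a] floor_divide_upper[of "real n" a]
      by (simp add: algebra_simps)
    then show ?thesis
      using z unfolding B_def coord_space_def l_def by (auto simp: PiE_UNIV_domain)
  qed
  ultimately show "\<exists>l\<in>deck. z - l \<in> trunc_bcontfun (k - 1) ` B" by (metis image_eqI)
qed

lemma homeomorphism_tonn_space:
  "homeomorphism (geom_realization (tonnetz L)) tonn_space (trunc_bcontfun n) apply_bcontfun"
proof
  have inv: "apply_bcontfun (trunc_bcontfun n x) = x" if "x \<in> geom_realization (tonnetz L)" for x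
    using realization_vanishes[OF that] by (auto simp: not_less)
  then show "x \<in> geom_realization (tonnetz L) \<Longrightarrow> apply_bcontfun (trunc_bcontfun n x) = x"
    "y \<in> tonn_space \<Longrightarrow> trunc_bcontfun n (apply_bcontfun y) = y"
    "apply_bcontfun ` tonn_space \<subseteq> geom_realization (tonnetz L)" for x y
    unfolding tonn_space_def by auto
  show "trunc_bcontfun n ` geom_realization (tonnetz L) \<subseteq> tonn_space"
    unfolding tonn_space_def ..
  show "continuous_on (geom_realization (tonnetz L)) (trunc_bcontfun n)"
    by (rule continuous_on_trunc_bcontfun)
  show "continuous_on tonn_space apply_bcontfun"
    by (intro continuous_on_coordinatewise_then_product continuous_on_apply_bcontfun_at_point)
qed

lemma lattice_cover_tonn_map:
  assumes "generic L" and "reduced L"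
  shows "lattice_cover coord_space deck tonn_map tonn_space"
proof
  show "tonn_map y = tonn_map z \<longleftrightarrow> z - y \<in> deck" if "y \<in> coord_space" "z \<in> coord_space" for y z
    using tonn_map_eq_imp_deck[OF assms(1) that] tonn_map_add_deck[of "z - y" y] by auto
qed (use continuous_on_tonn_map tonn_map_image[OF assms(2)] closed_coord_space zero_in_deck deck_diff
      deck_subset coord_space_add deck_separated deck_cocompact in auto)

end

theorem proposition2p9:
  fixes L :: "nat list" and k n :: nat
  assumes "k \<ge> 2" and "length L = k" and "\<forall>l\<in>set L. l > 0" and "sum_list L = n"
    and "generic L" and "reduced L"
  shows "\<forall>a\<in>geom_realization (tonnetz L). pi1_abelian (geom_realization (tonnetz L)) a"
proof
  fix a assume a: "a \<in> geom_realization (tonnetz L)"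
  interpret tonn_weights L
    using assms by unfold_locales auto
  have "pi1_abelian tonn_space (trunc_bcontfun (sum_list L) a)"
    using a lattice_cover.pi1_abelian_quotient[OF lattice_cover_tonn_map[OF assms(5,6)]]
      convex_imp_simply_connected[OF convex_coord_space]
    by (auto simp: tonn_space_def)
  then show "pi1_abelian (geom_realization (tonnetz L)) a"
    using pi1_abelian_homeomorphism[OF homeomorphism_tonn_space a] by simp
qed

end
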